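(* Let $n\ge1$, let $U_1,\dots,U_n$ be independent Uniform$[0,1]$ random variables, and let $N_t=|\{i:U_i\le t\}|$ for $t\in[0,1]$. Let $t_0=n^{-1/2}$. Then for every real $x$, $$\mathbb P\left[\sup_{t\in[t_0,1]}\frac{N_t}{1+nt}\ge x\right]\le\exp\!\left(1-n^{1/4}(x-1)\right).$$ *)

theory Defs
  imports "HOL-Probability.Probability"
begin

end

theory Submission
  imports Defs
begin

text \<open>
  Fix a grid t0 = g 0 < ... < g K = 1 and record each U_i only through its level, the grid cell
  containing it. Since N_t/t is a martingale in reversed time, Z_j = exp (\<lambda> N(g j) / g j) is a
  submartingale as j decreases from K to 0; on the finite space of level vectors this is just the
  convexity of exp. Doob's maximal inequality bounds the probability that some Z_j exceeds
  exp (\<lambda> x n) by E Z_0 / exp (\<lambda> x n) = (1 + t0 (exp (\<lambda>/t0) - 1))^n / exp (\<lambda> x n).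
  A grid of mesh at most 1/(2n) turns the supremum over t into a maximum over grid points, and
  \<lambda> = t0 n^(-1/4) gives the bound.
\<close>

lemma mult_exp_divide_minus_one_antimono:
  fixes s S lam :: real
  assumes "0 < s" "s \<le> S" "0 \<le> lam"
  shows "S * (exp (lam / S) - 1) \<le> s * (exp (lam / s) - 1)"
proof -
  have S: "0 < S" using assms by linarith
  define t where "t = s / S"
  have t: "0 \<le> t" "t \<le> 1" "t * (lam / s) = lam / S"
    using assms S by (auto simp: t_def divide_simps)
  have "exp ((1 - t) *\<^sub>R 0 + t *\<^sub>R (lam / s)) \<le> (1 - t) * exp 0 + t * exp (lam / s)"
    using convex_onD[OF exp_convex, of t 0 "lam / s"] t by auto
  then have "exp (lam / S) - 1 \<le> t * (exp (lam / s) - 1)"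
    using t by (simp add: algebra_simps)
  then have "S * (exp (lam / S) - 1) \<le> S * (t * (exp (lam / s) - 1))"
    using S by (simp add: mult_left_mono)
  also have "\<dots> = s * (exp (lam / s) - 1)"
    using S by (simp add: t_def)
  finally show ?thesis .
qed

lemma sum_prod_PiE_map:
  fixes h :: "'b \<Rightarrow> real" and f :: "'b \<Rightarrow> 'c"
  assumes "finite I" "finite S" "finite T" "f ` S \<subseteq> T"
  shows "(\<Sum>v\<in>{v \<in> I \<rightarrow>\<^sub>E S. P (\<lambda>i\<in>I. f (v i))}. \<Prod>i\<in>I. h (v i))
       = (\<Sum>u\<in>{u \<in> I \<rightarrow>\<^sub>E T. P u}. \<Prod>i\<in>I. \<Sum>k\<in>{k\<in>S. f k = u i}. h k)"
proof -
  let ?fv = "\<lambda>v. \<lambda>i\<in>I. f (v i)"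
  have fin: "finite {v \<in> I \<rightarrow>\<^sub>E S. P (?fv v)}" "finite {u \<in> I \<rightarrow>\<^sub>E T. P u}"
    using assms by (simp_all add: finite_PiE)
  have img: "?fv ` {v \<in> I \<rightarrow>\<^sub>E S. P (?fv v)} \<subseteq> {u \<in> I \<rightarrow>\<^sub>E T. P u}"
    using assms(4) by (auto simp: PiE_iff)
  have "(\<Sum>v\<in>{v \<in> I \<rightarrow>\<^sub>E S. P (?fv v)}. \<Prod>i\<in>I. h (v i))
      = (\<Sum>u\<in>{u \<in> I \<rightarrow>\<^sub>E T. P u}. \<Sum>v\<in>{v \<in> {v \<in> I \<rightarrow>\<^sub>E S. P (?fv v)}. ?fv v = u}. \<Prod>i\<in>I. h (v i))"
    by (rule sum.group[OF fin img, symmetric])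
  also have "\<dots> = (\<Sum>u\<in>{u \<in> I \<rightarrow>\<^sub>E T. P u}. \<Prod>i\<in>I. \<Sum>k\<in>{k\<in>S. f k = u i}. h k)"
  proof (rule sum.cong[OF refl])
    fix u assume u: "u \<in> {u \<in> I \<rightarrow>\<^sub>E T. P u}"
    have "{v \<in> {v \<in> I \<rightarrow>\<^sub>E S. P (?fv v)}. ?fv v = u} = PiE I (\<lambda>i. {k\<in>S. f k = u i})"
    proof (rule set_eqI)
      fix v
      have "v \<in> I \<rightarrow>\<^sub>E S \<and> ?fv v = u \<longleftrightarrow> v \<in> PiE I (\<lambda>i. {k\<in>S. f k = u i})"
        using u by (auto simp: PiE_iff extensional_def fun_eq_iff)
      then show "v \<in> {v \<in> {v \<in> I \<rightarrow>\<^sub>E S. P (?fv v)}. ?fv v = u} \<longleftrightarrow> v \<in> PiE I (\<lambda>i. {k\<in>S. f k = u i})"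
        using u by auto
    qed
    then show "(\<Sum>v\<in>{v \<in> {v \<in> I \<rightarrow>\<^sub>E S. P (?fv v)}. ?fv v = u}. \<Prod>i\<in>I. h (v i))
             = (\<Prod>i\<in>I. \<Sum>k\<in>{k\<in>S. f k = u i}. h k)"
      using assms by (simp add: prod_sum_PiE)
  qed
  finally show ?thesis .
qed

text \<open>
  Doob's maximal inequality on a finite weighted space, for a process run backwards in time:
  \<sigma> m v is what is observed at time m, Z k is a function of it for k \<ge> m, and \<open>submart\<close>
  says E[Z m | \<sigma> (Suc m)] \<ge> Z (Suc m).
\<close>

lemma discrete_maximal_inequality:
  fixes w :: "'v \<Rightarrow> real" and Z :: "nat \<Rightarrow> 'v \<Rightarrow> real" and \<sigma> :: "nat \<Rightarrow> 'v \<Rightarrow> 'b"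
  assumes "finite V" and w: "\<And>v. v \<in> V \<Longrightarrow> 0 \<le> w v"
    and adapted: "\<And>m k v v'. m \<le> k \<Longrightarrow> \<sigma> m v = \<sigma> m v' \<Longrightarrow> Z k v = Z k v'"
    and submart: "\<And>m P. m < K \<Longrightarrow>
      (\<Sum>v\<in>{v\<in>V. P (\<sigma> (Suc m) v)}. w v * Z (Suc m) v) \<le> (\<Sum>v\<in>{v\<in>V. P (\<sigma> (Suc m) v)}. w v * Z m v)"
  shows "c * (\<Sum>v\<in>{v\<in>V. \<exists>k\<le>K. c \<le> Z k v}. w v) \<le> (\<Sum>v\<in>{v\<in>V. \<exists>k\<le>K. c \<le> Z k v}. w v * Z 0 v)"
proof -
  define A where "A m = {v\<in>V. \<exists>k\<in>{m..K}. c \<le> Z k v}" for m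
  have reached: "c * (\<Sum>v\<in>B. w v) \<le> (\<Sum>v\<in>B. w v * Z m v)" if "B \<subseteq> {v\<in>V. c \<le> Z m v}" for B m
    unfolding sum_distrib_left
  proof (rule sum_mono)
    fix v assume "v \<in> B"
    then have "c * w v \<le> Z m v * w v" using that w by (auto intro: mult_right_mono)
    then show "c * w v \<le> w v * Z m v" by (simp add: mult.commute)
  qed
  have "c * (\<Sum>v\<in>A m. w v) \<le> (\<Sum>v\<in>A m. w v * Z m v)" if "m \<le> K" for m
    using that
  proof (induction m rule: inc_induct)
    case base
    show ?case by (rule reached) (auto simp: A_def)
  next
    case (step m)
    define D where "D = {v\<in>V. c \<le> Z m v} - A (Suc m)"
    have "A m = A (Suc m) \<union> {v\<in>V. c \<le> Z m v}"
      using step.hyps by (auto simp: A_def atLeastAtMost_insertL[symmetric])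
    then have split: "A m = A (Suc m) \<union> D" "A (Suc m) \<inter> D = {}"
      by (auto simp: D_def)
    have fin: "finite (A (Suc m))" "finite D"
      using \<open>finite V\<close> by (auto simp: A_def D_def)
    \<comment> \<open>A (Suc m) is determined by \<sigma> (Suc m), so the submartingale property applies to it.\<close>
    have "A (Suc m) = {v\<in>V. (\<lambda>u. \<exists>k\<in>{Suc m..K}. \<exists>v'. \<sigma> (Suc m) v' = u \<and> c \<le> Z k v') (\<sigma> (Suc m) v)}"
      unfolding A_def by auto (metis adapted atLeastAtMost_iff)
    then have "(\<Sum>v\<in>A (Suc m). w v * Z (Suc m) v) \<le> (\<Sum>v\<in>A (Suc m). w v * Z m v)"
      using submart step.hyps by simp
    moreover have "c * (\<Sum>v\<in>D. w v) \<le> (\<Sum>v\<in>D. w v * Z m v)"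
      by (rule reached) (auto simp: D_def)
    ultimately show ?case
      using step.IH unfolding split(1) sum.union_disjoint[OF fin split(2)] distrib_left by linarith
  qed
  from this[of 0] show ?thesis by (simp add: A_def atLeast0AtMost Bex_def)
qed

text \<open>
  For a vector v of grid levels, v i \<le> j says that the i-th point lies below g j, so this is
  exp (lam N(g j) / g j) with N counting points (see \<open>exp_scaled_count_levels\<close>).
\<close>

definition exp_scaled_count :: "real \<Rightarrow> (nat \<Rightarrow> real) \<Rightarrow> nat \<Rightarrow> nat \<Rightarrow> (nat \<Rightarrow> nat) \<Rightarrow> real" where
  "exp_scaled_count lam g n j v = (\<Prod>i<n. if v i \<le> j then exp (lam / g j) else 1)"

lemma exp_scaled_count_submartingale:
  fixes p g :: "nat \<Rightarrow> real" and P :: "(nat \<Rightarrow> nat) \<Rightarrow> bool" and n :: nat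
  assumes p: "\<And>k. 0 \<le> p k"
    and g: "\<And>j. j \<le> K \<Longrightarrow> (\<Sum>k\<le>j. p k) = g j"
    and g_pos: "\<And>j. j \<le> K \<Longrightarrow> 0 < g j"
    and "m < K" "0 \<le> lam"
  defines "V \<equiv> {v \<in> {..<n} \<rightarrow>\<^sub>E {..Suc K}. P (\<lambda>i\<in>{..<n}. max (v i) (Suc m))}"
  shows "(\<Sum>v\<in>V. (\<Prod>i<n. p (v i)) * exp_scaled_count lam g n (Suc m) v)
       \<le> (\<Sum>v\<in>V. (\<Prod>i<n. p (v i)) * exp_scaled_count lam g n m v)"
proof -
  define \<phi> where "\<phi> j k = (if k \<le> j then exp (lam / g j) else 1)" for j k :: nat
  define fibre where "fibre u = {k\<in>{..Suc K}. max k (Suc m) = u}" for u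
  have weighted: "(\<Prod>i<n. p (v i)) * exp_scaled_count lam g n j v = (\<Prod>i<n. p (v i) * \<phi> j (v i))" for j v
    by (simp add: exp_scaled_count_def \<phi>_def prod.distrib)
  have sum_fibre: "(\<Sum>v\<in>V. \<Prod>i<n. p (v i) * \<phi> j (v i))
      = (\<Sum>u\<in>{u \<in> {..<n} \<rightarrow>\<^sub>E {..Suc K}. P u}. \<Prod>i<n. \<Sum>k\<in>fibre (u i). p k * \<phi> j k)" for j
    unfolding V_def fibre_def using \<open>m < K\<close> by (intro sum_prod_PiE_map) auto
  have fibre_le: "(\<Sum>k\<in>fibre u. p k * \<phi> (Suc m) k) \<le> (\<Sum>k\<in>fibre u. p k * \<phi> m k)" for u
  proof (cases "u = Suc m")
    case True
    \<comment> \<open>Only on the merged fibre do the two integrands differ; there convexity of exp decides.\<close>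
    have "fibre u = {..Suc m}" using True \<open>m < K\<close> by (auto simp: fibre_def)
    have g_m: "0 < g m" "g m \<le> g (Suc m)" "g (Suc m) = g m + p (Suc m)"
      using g_pos[of m] g[of m] g[of "Suc m"] p[of "Suc m"] \<open>m < K\<close> by auto
    have "(\<Sum>k\<le>Suc m. p k * \<phi> (Suc m) k) = g (Suc m) * (exp (lam / g (Suc m)) - 1) + g (Suc m)"
      using g[of "Suc m"] \<open>m < K\<close> by (simp add: \<phi>_def sum_distrib_right[symmetric] algebra_simps)
    also have "\<dots> \<le> g m * (exp (lam / g m) - 1) + g (Suc m)"
      using mult_exp_divide_minus_one_antimono g_m \<open>0 \<le> lam\<close> by simp
    also have "\<dots> = (\<Sum>k\<le>Suc m. p k * \<phi> m k)"
      using g[of m] g_m \<open>m < K\<close> by (simp add: \<phi>_def sum_distrib_right[symmetric] algebra_simps)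
    finally show ?thesis using \<open>fibre u = {..Suc m}\<close> by simp
  next
    case False
    then have "\<phi> (Suc m) k = \<phi> m k" if "k \<in> fibre u" for k
      using that by (auto simp: fibre_def \<phi>_def)
    then show ?thesis by (intro eq_refl sum.cong) simp_all
  qed
  have "0 \<le> \<phi> j k" for j k by (simp add: \<phi>_def)
  then show ?thesis
    unfolding weighted sum_fibre using p
    by (intro fibre_le sum_mono prod_mono conjI sum_nonneg mult_nonneg_nonneg) auto
qed

lemma exp_scaled_count_maximal_bound:
  fixes p g :: "nat \<Rightarrow> real"
  assumes p: "\<And>k. 0 \<le> p k"
    and g: "\<And>j. j \<le> K \<Longrightarrow> (\<Sum>k\<le>j. p k) = g j"
    and p_total: "(\<Sum>k\<le>Suc K. p k) = 1"
    and g_pos: "\<And>j. j \<le> K \<Longrightarrow> 0 < g j"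
    and "0 \<le> lam"
  shows "c * (\<Sum>v\<in>{v \<in> {..<n} \<rightarrow>\<^sub>E {..Suc K}. \<exists>k\<le>K. c \<le> exp_scaled_count lam g n k v}. \<Prod>i<n. p (v i))
       \<le> (1 + g 0 * (exp (lam / g 0) - 1)) ^ n"
proof -
  let ?V = "{..<n} \<rightarrow>\<^sub>E {..Suc K}"
  let ?Z = "exp_scaled_count lam g n"
  let ?w = "\<lambda>v. \<Prod>i<n. p (v i)"
  have w: "0 \<le> ?w v" for v using p by (simp add: prod_nonneg)
  have Z: "0 \<le> ?Z j v" for j v by (simp add: exp_scaled_count_def prod_nonneg)
  have "c * (\<Sum>v\<in>{v \<in> ?V. \<exists>k\<le>K. c \<le> ?Z k v}. ?w v) \<le> (\<Sum>v\<in>{v \<in> ?V. \<exists>k\<le>K. c \<le> ?Z k v}. ?w v * ?Z 0 v)"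
  proof (rule discrete_maximal_inequality[where \<sigma> = "\<lambda>m v. \<lambda>i\<in>{..<n}. max (v i) m"])
    show "finite ?V" by (simp add: finite_PiE)
    show "?Z k v = ?Z k v'"
      if "m \<le> k" and same: "(\<lambda>i\<in>{..<n}. max (v i) m) = (\<lambda>i\<in>{..<n}. max (v' i) m)" for m k v v'
    proof -
      have "v i \<le> k \<longleftrightarrow> v' i \<le> k" if "i < n" for i
        using \<open>m \<le> k\<close> fun_cong[OF same, of i] that by (auto simp: max_def split: if_splits)
      then show ?thesis unfolding exp_scaled_count_def by (intro prod.cong) auto
    qed
  qed (use w exp_scaled_count_submartingale[OF p g g_pos _ \<open>0 \<le> lam\<close>] in auto)
  also have "\<dots> \<le> (\<Sum>v\<in>?V. ?w v * ?Z 0 v)"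
    by (intro sum_mono2) (auto simp: finite_PiE w Z)
  also have "\<dots> = (\<Sum>v\<in>?V. \<Prod>i<n. p (v i) * (if v i = 0 then exp (lam / g 0) else 1))"
    by (simp add: exp_scaled_count_def prod.distrib)
  also have "\<dots> = (\<Prod>i<n. \<Sum>k\<le>Suc K. p k * (if k = 0 then exp (lam / g 0) else 1))"
    by (rule prod_sum_PiE[symmetric]) auto
  also have "\<dots> = (1 + g 0 * (exp (lam / g 0) - 1)) ^ n"
  proof -
    have "(\<Sum>k\<le>Suc K. p k * (if k = 0 then exp (lam / g 0) else 1)) = 1 + g 0 * (exp (lam / g 0) - 1)"
      using p_total g[of 0] by (simp add: sum.atMost_Suc_shift algebra_simps del: sum.atMost_Suc)
    then show ?thesis by (simp del: sum.atMost_Suc)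
  qed
  finally show ?thesis .
qed

definition level :: "(nat \<Rightarrow> real) \<Rightarrow> nat \<Rightarrow> real \<Rightarrow> nat" where
  "level g K u = card {j \<in> {..K}. g j < u}"

lemma level_le_iff:
  assumes "mono g" and "j \<le> K"
  shows "level g K u \<le> j \<longleftrightarrow> u \<le> g j"
proof
  assume "level g K u \<le> j"
  show "u \<le> g j"
  proof (rule ccontr)
    assume "\<not> u \<le> g j"
    then have "g i < u" if "i \<le> j" for i using monoD[OF \<open>mono g\<close> that] by linarith
    then have "{..j} \<subseteq> {i \<in> {..K}. g i < u}" using \<open>j \<le> K\<close> by auto
    then have "card {..j} \<le> level g K u" unfolding level_def by (intro card_mono) auto
    then show False using \<open>level g K u \<le> j\<close> by simp
  qed
next
  assume "u \<le> g j"
  then have "\<not> g i < u" if "j \<le> i" for i using monoD[OF \<open>mono g\<close> that] by linarith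
  then have "{i \<in> {..K}. g i < u} \<subseteq> {..<j}" by (auto simp: not_le[symmetric])
  then have "level g K u \<le> card {..<j}" unfolding level_def by (intro card_mono) auto
  then show "level g K u \<le> j" by simp
qed

lemma level_le_Suc: "level g K u \<le> Suc K"
proof -
  have "level g K u \<le> card {..K}" unfolding level_def by (intro card_mono) auto
  then show ?thesis by simp
qed

lemma level_vimage_sets:
  assumes "mono g"
  shows "level g K -` {k} \<in> sets borel"
proof -
  have le_sets: "{u. level g K u \<le> k} \<in> sets borel" for k
  proof (cases "k \<le> K")
    case True
    then have "{u. level g K u \<le> k} = {..g k}" using level_le_iff[OF \<open>mono g\<close>] by auto
    then show ?thesis by simp
  next
    case False
    then have "level g K u \<le> k" for u using level_le_Suc[of g K u] by linarith
    then have "{u. level g K u \<le> k} = UNIV" by auto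
    then show ?thesis by simp
  qed
  show ?thesis
  proof (cases k)
    case 0
    then have "level g K -` {k} = {u. level g K u \<le> 0}" by auto
    then show ?thesis using le_sets[of 0] by simp
  next
    case (Suc k')
    then have "level g K -` {k} = {u. level g K u \<le> Suc k'} - {u. level g K u \<le> k'}" by auto
    then show ?thesis using le_sets by auto
  qed
qed

lemma (in finite_measure) measure_le_eq_sum_vimage:
  fixes f :: "'a \<Rightarrow> nat"
  assumes "\<And>k. f -` {k} \<inter> space M \<in> sets M"
  shows "measure M {x \<in> space M. f x \<le> j} = (\<Sum>k\<le>j. measure M (f -` {k} \<inter> space M))"
proof -
  have "{x \<in> space M. f x \<le> j} = (\<Union>k\<le>j. f -` {k} \<inter> space M)" by auto
  also have "measure M \<dots> = (\<Sum>k\<le>j. measure M (f -` {k} \<inter> space M))"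
    using assms by (intro finite_measure_finite_Union) (auto simp: disjoint_family_on_def)
  finally show ?thesis .
qed

lemma uniform_level_partial_sums:
  assumes "mono g" and "0 \<le> g 0" "g K \<le> 1"
  defines "p \<equiv> \<lambda>k. measure (uniform_measure lborel {0..1}) (level g K -` {k})"
  shows "\<And>j. j \<le> K \<Longrightarrow> (\<Sum>k\<le>j. p k) = g j" and "(\<Sum>k\<le>Suc K. p k) = 1"
proof -
  let ?Q = "uniform_measure lborel {0..1::real}"
  interpret Q: prob_space ?Q by (rule prob_space_uniform_measure) auto
  have partial: "(\<Sum>k\<le>j. p k) = measure ?Q {u. level g K u \<le> j}" for j
    using Q.measure_le_eq_sum_vimage[of "level g K" j] level_vimage_sets[OF \<open>mono g\<close>]
    by (simp add: p_def)
  show "(\<Sum>k\<le>j. p k) = g j" if "j \<le> K" for j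
  proof -
    have "0 \<le> g j" "g j \<le> 1" using monoD[OF \<open>mono g\<close>, of 0 j] monoD[OF \<open>mono g\<close>, of j K] that assms(2,3) by auto
    moreover have "{u. level g K u \<le> j} = {..g j}" using level_le_iff[OF \<open>mono g\<close> that] by auto
    moreover have "{0..1} \<inter> {..g j} = {0..g j}" using \<open>g j \<le> 1\<close> by auto
    ultimately show ?thesis
      unfolding partial by (simp add: measure_def divide_ennreal_def)
  qed
  have "{u. level g K u \<le> Suc K} = space ?Q" using level_le_Suc[of g K] by auto
  then show "(\<Sum>k\<le>Suc K. p k) = 1" unfolding partial by (simp add: Q.prob_space)
qed

lemma (in prob_space) prob_indep_vars_vimage_eq:
  fixes X :: "'i \<Rightarrow> 'a \<Rightarrow> 'c" and f :: "'c \<Rightarrow> 'b"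
  assumes indep: "indep_vars N X I" and "finite I"
    and f: "\<And>i b. i \<in> I \<Longrightarrow> f -` {b} \<inter> space (N i) \<in> sets (N i)"
  shows "prob {\<omega> \<in> space M. \<forall>i\<in>I. f (X i \<omega>) = v i} = (\<Prod>i\<in>I. prob {\<omega> \<in> space M. f (X i \<omega>) = v i})"
proof (cases "I = {}")
  case True
  then show ?thesis by (simp add: prob_space)
next
  case False
  have X: "X i \<in> measurable M (N i)" if "i \<in> I" for i
    using indep that unfolding indep_vars_def2 by auto
  have X_space: "X i \<omega> \<in> space (N i)" if "i \<in> I" "\<omega> \<in> space M" for i \<omega>
    using measurable_space[OF X] that by blast
  have event: "{\<omega> \<in> space M. f (X i \<omega>) = v i} = X i -` (f -` {v i} \<inter> space (N i)) \<inter> space M" if "i \<in> I" for i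
    using X_space that by auto
  have "{\<omega> \<in> space M. \<forall>i\<in>I. f (X i \<omega>) = v i} = (\<Inter>i\<in>I. X i -` (f -` {v i} \<inter> space (N i)) \<inter> space M)"
    using False X_space by auto
  also have "prob \<dots> = (\<Prod>i\<in>I. prob (X i -` (f -` {v i} \<inter> space (N i)) \<inter> space M))"
    by (rule indep_varsD_finite[OF indep False \<open>finite I\<close> f])
  finally show ?thesis by (simp only: event cong: prod.cong)
qed

lemma (in prob_space) prob_le_sum_indep_vars_vimage:
  fixes X :: "'i \<Rightarrow> 'a \<Rightarrow> 'c" and f :: "'c \<Rightarrow> 'b"
  assumes indep: "indep_vars N X I" and "finite I" "finite A"
    and f: "\<And>i b. i \<in> I \<Longrightarrow> f -` {b} \<inter> space (N i) \<in> sets (N i)"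
    and S: "S \<subseteq> (\<Union>v\<in>A. {\<omega> \<in> space M. \<forall>i\<in>I. f (X i \<omega>) = v i})"
  shows "prob S \<le> (\<Sum>v\<in>A. \<Prod>i\<in>I. prob {\<omega> \<in> space M. f (X i \<omega>) = v i})"
proof -
  have X: "X i \<in> measurable M (N i)" if "i \<in> I" for i
    using indep that unfolding indep_vars_def2 by auto
  have "{\<omega> \<in> space M. f (X i \<omega>) = b} = X i -` (f -` {b} \<inter> space (N i)) \<inter> space M" if "i \<in> I" for i b
    using measurable_space[OF X[OF that]] by auto
  then have "{\<omega> \<in> space M. f (X i \<omega>) = b} \<in> events" if "i \<in> I" for i b
    using measurable_sets[OF X f] that by simp
  then have events: "{\<omega> \<in> space M. \<forall>i\<in>I. f (X i \<omega>) = v i} \<in> events" for v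
    using \<open>finite I\<close> by (intro sets.sets_Collect_finite_All) auto
  have "prob S \<le> prob (\<Union>v\<in>A. {\<omega> \<in> space M. \<forall>i\<in>I. f (X i \<omega>) = v i})"
    using S events \<open>finite A\<close> by (intro finite_measure_mono) auto
  also have "\<dots> \<le> (\<Sum>v\<in>A. prob {\<omega> \<in> space M. \<forall>i\<in>I. f (X i \<omega>) = v i})"
    using events \<open>finite A\<close> by (intro measure_UNION_le) auto
  also have "\<dots> = (\<Sum>v\<in>A. \<Prod>i\<in>I. prob {\<omega> \<in> space M. f (X i \<omega>) = v i})"
    using prob_indep_vars_vimage_eq[OF indep \<open>finite I\<close> f] by simp
  finally show ?thesis .
qed

lemma exp_scaled_count_levels:
  assumes "mono g" and "j \<le> K"
  shows "exp_scaled_count lam g n j (\<lambda>i\<in>{..<n}. level g K (u i))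
       = exp (lam * real (card {i. i < n \<and> u i \<le> g j}) / g j)"
proof -
  have "exp_scaled_count lam g n j (\<lambda>i\<in>{..<n}. level g K (u i))
      = (\<Prod>i<n. if u i \<le> g j then exp (lam / g j) else 1)"
    unfolding exp_scaled_count_def using level_le_iff[OF \<open>mono g\<close> \<open>j \<le> K\<close>] by (intro prod.cong) auto
  also have "\<dots> = exp (lam / g j) ^ card {i. i < n \<and> u i \<le> g j}"
    by (simp add: prod.If_cases Int_def conj_commute)
  finally show ?thesis by (simp add: exp_of_nat_mult[symmetric])
qed

definition grid :: "real \<Rightarrow> nat \<Rightarrow> nat \<Rightarrow> real" where
  "grid t0 K j = t0 + real j * ((1 - t0) / real K)"

lemma grid_0 [simp]: "grid t0 K 0 = t0"
  by (simp add: grid_def)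

lemma grid_last: "0 < K \<Longrightarrow> grid t0 K K = 1"
  by (simp add: grid_def)

lemma grid_Suc: "grid t0 K (Suc j) = grid t0 K j + (1 - t0) / real K"
  by (simp add: grid_def distrib_right add_divide_distrib)

lemma grid_mono: "t0 \<le> 1 \<Longrightarrow> mono (grid t0 K)"
  unfolding grid_def by (intro monoI add_left_mono mult_right_mono) auto

lemma grid_pos: "0 < t0 \<Longrightarrow> t0 \<le> 1 \<Longrightarrow> 0 < grid t0 K j"
  by (simp add: grid_def add_pos_nonneg)

lemma grid_cover:
  fixes g :: "nat \<Rightarrow> real"
  assumes step: "\<And>j. j < K \<Longrightarrow> g (Suc j) \<le> g j + h" and "0 \<le> h" "g 0 \<le> t" "t \<le> g K"
  shows "\<exists>k\<le>K. t \<le> g k \<and> g k \<le> t + h"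
proof -
  define k where "k = (LEAST k. t \<le> g k)"
  have "k \<le> K" "t \<le> g k" using \<open>t \<le> g K\<close> unfolding k_def by (auto intro: Least_le LeastI)
  moreover have "g k \<le> t + h"
  proof (cases k)
    case 0
    then show ?thesis using \<open>g 0 \<le> t\<close> \<open>0 \<le> h\<close> by simp
  next
    case (Suc k')
    then have "\<not> t \<le> g k'" unfolding k_def by (metis lessI not_less_Least)
    then show ?thesis using step[of k'] Suc \<open>k \<le> K\<close> by simp
  qed
  ultimately show ?thesis by blast
qed

lemma sup_count_ratio_imp_grid:
  fixes N :: "real \<Rightarrow> nat" and g :: "nat \<Rightarrow> real"
  assumes "mono N" and N_le: "\<And>t. N t \<le> n" and "0 < x" "0 \<le> t0" "t0 \<le> 1"
    and cover: "\<And>t. t \<in> {t0..1} \<Longrightarrow> \<exists>k\<le>K. t \<le> g k \<and> g k \<le> t + h" and "real n * h \<le> 1/2"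
    and sup: "x \<le> (SUP t\<in>{t0..1}. real (N t) / (1 + real n * t))"
  shows "\<exists>k\<le>K. x * real n * g k < real (N (g k))"
proof -
  define \<epsilon> where "\<epsilon> = x / (2 * (1 + real n))"
  have "0 < \<epsilon>" using \<open>0 < x\<close> by (simp add: \<epsilon>_def)
  have bdd: "bdd_above ((\<lambda>t. real (N t) / (1 + real n * t)) ` {t0..1})"
  proof (rule bdd_aboveI2)
    fix t assume "t \<in> {t0..1}"
    then have "1 \<le> 1 + real n * t" using \<open>0 \<le> t0\<close> by simp
    then have "real (N t) / (1 + real n * t) \<le> real (N t) / 1" by (intro divide_left_mono) auto
    then show "real (N t) / (1 + real n * t) \<le> real n" using N_le[of t] by linarith
  qed
  obtain t where t: "t \<in> {t0..1}" "x - \<epsilon> < real (N t) / (1 + real n * t)"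
    using sup \<open>0 < \<epsilon>\<close> less_cSUP_iff[OF _ bdd, of "x - \<epsilon>"] \<open>t0 \<le> 1\<close> by force
  obtain k where k: "k \<le> K" "t \<le> g k" "g k \<le> t + h" using cover[OF t(1)] by blast
  have "0 \<le> t" "t \<le> 1" using t(1) \<open>0 \<le> t0\<close> by auto
  have "x * real n * g k \<le> x * real n * (t + h)"
    using k(3) \<open>0 < x\<close> by (intro mult_left_mono) auto
  also have "\<dots> = x * real n * t + x * (real n * h)" by (simp add: algebra_simps)
  also have "\<dots> \<le> x * real n * t + x / 2"
    using \<open>real n * h \<le> 1/2\<close> \<open>0 < x\<close> by (simp add: mult_left_mono)
  also have "\<dots> \<le> (x - \<epsilon>) * (1 + real n * t)"
  proof -
    have "\<epsilon> * (1 + real n * t) \<le> \<epsilon> * (1 + real n)"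
      using \<open>0 < \<epsilon>\<close> \<open>t \<le> 1\<close> by (simp add: mult_left_le)
    also have "\<dots> = x / 2" by (simp add: \<epsilon>_def field_simps)
    finally show ?thesis by (simp add: algebra_simps)
  qed
  also have "\<dots> < real (N t)"
    using t(2) \<open>0 \<le> t\<close> by (simp add: less_divide_eq add_pos_nonneg)
  also have "\<dots> \<le> real (N (g k))" using \<open>mono N\<close> k(2) by (simp add: mono_def)
  finally show ?thesis using k(1) by blast
qed

lemma sup_count_ratio_imp_exp_scaled_count:
  fixes u :: "nat \<Rightarrow> real"
  assumes "0 < t0" "t0 \<le> 1" "0 \<le> lam" "0 < x" "0 < K" "2 * n \<le> K"
    and sup: "x \<le> (SUP t\<in>{t0..1}. real (card {i. i < n \<and> u i \<le> t}) / (1 + real n * t))"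
  shows "\<exists>k\<le>K. exp (lam * x * real n) \<le> exp_scaled_count lam (grid t0 K) n k (\<lambda>i\<in>{..<n}. level (grid t0 K) K (u i))"
proof -
  let ?g = "grid t0 K" and ?h = "(1 - t0) / real K"
  have "real n * (1 - t0) \<le> real n" using \<open>0 < t0\<close> by (simp add: mult_left_le)
  moreover have "2 * real n \<le> real K" using \<open>2 * n \<le> K\<close> by linarith
  ultimately have h: "0 \<le> ?h" "real n * ?h \<le> 1/2"
    using \<open>t0 \<le> 1\<close> \<open>0 < K\<close> by (auto simp: field_simps)
  have cover: "\<exists>k\<le>K. t \<le> ?g k \<and> ?g k \<le> t + ?h" if "t \<in> {t0..1}" for t
    using that h grid_last[OF \<open>0 < K\<close>] by (intro grid_cover) (auto simp: grid_Suc)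
  have count_mono: "mono (\<lambda>t. card {i. i < n \<and> u i \<le> t})"
    by (auto simp: mono_def intro: card_mono)
  have count_le: "card {i. i < n \<and> u i \<le> t} \<le> n" for t
    using card_mono[of "{..<n}" "{i. i < n \<and> u i \<le> t}"] by auto
  obtain k where "k \<le> K" and k: "x * real n * ?g k < real (card {i. i < n \<and> u i \<le> ?g k})"
    using sup_count_ratio_imp_grid[OF count_mono count_le \<open>0 < x\<close> _ \<open>t0 \<le> 1\<close> cover h(2) sup]
      \<open>0 < t0\<close> by auto
  have "lam * x * real n \<le> lam * real (card {i. i < n \<and> u i \<le> ?g k}) / ?g k"
    using mult_left_mono[OF less_imp_le[OF k] \<open>0 \<le> lam\<close>] grid_pos[OF \<open>0 < t0\<close> \<open>t0 \<le> 1\<close>, of K k]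
    by (simp add: pos_le_divide_eq algebra_simps)
  then show ?thesis
    using \<open>k \<le> K\<close> exp_scaled_count_levels[OF grid_mono[OF \<open>t0 \<le> 1\<close>] \<open>k \<le> K\<close>] by auto
qed

lemma binomial_mgf_bound:
  fixes a t0 x :: real and n :: nat
  assumes "1 \<le> a" "0 \<le> t0" "real n * t0 = a\<^sup>2"
  shows "(1 + t0 * (exp (1 / a) - 1)) ^ n / exp (a * x) \<le> exp (1 - a * (x - 1))"
proof -
  define y where "y = exp (1 / a) - 1"
  have "0 \<le> y" using \<open>1 \<le> a\<close> by (simp add: y_def)
  have "y \<le> 1 / a + (1 / a)\<^sup>2"
    unfolding y_def using exp_bound[of "1 / a"] \<open>1 \<le> a\<close> by simp
  have "(1 + t0 * y) ^ n \<le> exp (t0 * y) ^ n"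
    using \<open>0 \<le> y\<close> \<open>0 \<le> t0\<close> by (intro power_mono) (auto simp: add.commute)
  also have "\<dots> = exp (a\<^sup>2 * y)"
    using assms(3) by (simp add: exp_of_nat_mult[symmetric] mult.assoc[symmetric])
  also have "\<dots> \<le> exp (a\<^sup>2 * (1 / a + (1 / a)\<^sup>2))"
    using \<open>y \<le> _\<close> by (simp add: mult_left_mono)
  also have "\<dots> = exp (a + 1)"
    using \<open>1 \<le> a\<close> by (simp add: field_simps power2_eq_square)
  finally have "(1 + t0 * y) ^ n / exp (a * x) \<le> exp (a + 1) / exp (a * x)"
    by (simp add: divide_right_mono)
  then show ?thesis by (simp add: y_def exp_diff[symmetric] algebra_simps)
qed

lemma divide_sqrt_eq_powr_quarter_squared:
  fixes r :: real
  assumes "0 \<le> r"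
  shows "r / sqrt r = (r powr (1/4))\<^sup>2"
proof -
  have "(r powr (1/4))\<^sup>2 = r powr (1/2)"
    unfolding power2_eq_square by (simp add: powr_add[symmetric])
  then show ?thesis using assms by (simp add: real_div_sqrt powr_half_sqrt)
qed

theorem count_ratio_sup_tail_bound:
  fixes M :: "'a measure" and U :: "nat \<Rightarrow> 'a \<Rightarrow> real" and n :: nat and t0 lam x :: real
  assumes "prob_space M"
    and indep: "prob_space.indep_vars M (\<lambda>_. borel) U {..<n}"
    and uniform: "\<And>i. i < n \<Longrightarrow> distr M borel (U i) = uniform_measure lborel {0..1}"
    and "0 < t0" "t0 \<le> 1" "0 \<le> lam" "0 < x"
  shows "measure M {\<omega> \<in> space M.
           x \<le> (SUP t\<in>{t0..1}. real (card {i. i < n \<and> U i \<omega> \<le> t}) / (1 + real n * t))}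
         \<le> (1 + t0 * (exp (lam / t0) - 1)) ^ n / exp (lam * x * real n)"
proof -
  interpret prob_space M by fact
  define E where "E = {\<omega> \<in> space M.
    x \<le> (SUP t\<in>{t0..1}. real (card {i. i < n \<and> U i \<omega> \<le> t}) / (1 + real n * t))}"
  define K where "K = Suc (2 * n)"
  define g where "g = grid t0 K"
  define p where "p k = measure (uniform_measure lborel {0..1}) (level g K -` {k})" for k
  define c where "c = exp (lam * x * real n)"
  define A where "A = {v \<in> {..<n} \<rightarrow>\<^sub>E {..Suc K}. \<exists>k\<le>K. c \<le> exp_scaled_count lam g n k v}"
  have g_mono: "mono g" and g_pos: "\<And>j. 0 < g j"
    using grid_mono grid_pos \<open>0 < t0\<close> \<open>t0 \<le> 1\<close> by (auto simp: g_def)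
  have p_sums: "\<And>j. j \<le> K \<Longrightarrow> (\<Sum>k\<le>j. p k) = g j" "(\<Sum>k\<le>Suc K. p k) = 1"
    using uniform_level_partial_sums[OF g_mono, of K] grid_last[of K t0] \<open>0 < t0\<close>
    by (auto simp: p_def g_def K_def)
  have level_prob: "prob {\<omega> \<in> space M. level g K (U i \<omega>) = k} = p k" if "i < n" for i k
  proof -
    have "U i \<in> borel_measurable M" using indep that unfolding indep_vars_def2 by auto
    then have "measure (distr M borel (U i)) (level g K -` {k}) = prob (U i -` level g K -` {k} \<inter> space M)"
      using level_vimage_sets[OF g_mono] by (intro measure_distr) auto
    also have "U i -` level g K -` {k} \<inter> space M = {\<omega> \<in> space M. level g K (U i \<omega>) = k}" by auto
    finally show ?thesis using uniform[OF that] by (simp add: p_def)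
  qed
  have "E \<subseteq> (\<Union>v\<in>A. {\<omega> \<in> space M. \<forall>i\<in>{..<n}. level g K (U i \<omega>) = v i})"
  proof
    fix \<omega> assume "\<omega> \<in> E"
    let ?v = "\<lambda>i\<in>{..<n}. level g K (U i \<omega>)"
    have "?v \<in> A"
      using \<open>\<omega> \<in> E\<close> sup_count_ratio_imp_exp_scaled_count[of t0 lam x K n "\<lambda>i. U i \<omega>"] assms(4-7)
      by (auto simp: E_def A_def c_def g_def K_def level_le_Suc)
    then show "\<omega> \<in> (\<Union>v\<in>A. {\<omega> \<in> space M. \<forall>i\<in>{..<n}. level g K (U i \<omega>) = v i})"
      using \<open>\<omega> \<in> E\<close> by (intro UN_I[of ?v]) (auto simp: E_def)
  qed
  then have "prob E \<le> (\<Sum>v\<in>A. \<Prod>i<n. prob {\<omega> \<in> space M. level g K (U i \<omega>) = v i})"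
    using level_vimage_sets[OF g_mono]
    by (intro prob_le_sum_indep_vars_vimage[OF indep]) (auto simp: A_def finite_PiE)
  also have "\<dots> = (\<Sum>v\<in>A. \<Prod>i<n. p (v i))"
    using level_prob by simp
  also have "\<dots> \<le> (1 + t0 * (exp (lam / t0) - 1)) ^ n / c"
    using exp_scaled_count_maximal_bound[of p K g lam c n] p_sums g_pos \<open>0 \<le> lam\<close>
    by (simp add: A_def g_def pos_le_divide_eq mult.commute c_def p_def)
  finally show ?thesis by (simp add: E_def c_def)
qed

theorem lemmaC3:
  fixes M :: "'a measure" and U :: "nat \<Rightarrow> 'a \<Rightarrow> real" and n :: nat and x :: real
  assumes "prob_space M"
    and "n \<ge> 1"
    and "prob_space.indep_vars M (\<lambda>_. borel) U {..<n}"
    and "\<And>i. i < n \<Longrightarrow> distr M borel (U i) = uniform_measure lborel {0..1}"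
  shows "measure M {\<omega> \<in> space M.
           (SUP t\<in>{1 / sqrt (real n)..1}. real (card {i. i < n \<and> U i \<omega> \<le> t}) / (1 + real n * t)) \<ge> x}
         \<le> exp (1 - real n powr (1/4) * (x - 1))"
proof (cases "x \<le> 1")
  case True
  then have "real n powr (1/4) * (x - 1) \<le> 0" by (intro mult_nonneg_nonpos) auto
  then have "1 \<le> exp (1 - real n powr (1/4) * (x - 1))" by simp
  then show ?thesis using prob_space.prob_le_1[OF assms(1)] by (meson order_trans)
next
  case False
  define a where "a = real n powr (1/4)"
  define t0 where "t0 = 1 / sqrt (real n)"
  have "1 \<le> a" "0 < t0" "t0 \<le> 1" using \<open>n \<ge> 1\<close> by (auto simp: a_def t0_def ge_one_powr_ge_zero)
  have "real n * t0 = a\<^sup>2"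
    using divide_sqrt_eq_powr_quarter_squared[of "real n"] by (simp add: a_def t0_def)
  then have "t0 / a / t0 = 1 / a" "t0 / a * x * real n = a * x"
    using \<open>0 < t0\<close> \<open>1 \<le> a\<close> by (auto simp: field_simps power2_eq_square)
  then show ?thesis
    using count_ratio_sup_tail_bound[OF assms(1,3,4) \<open>0 < t0\<close> \<open>t0 \<le> 1\<close>, of "t0 / a" x]
      binomial_mgf_bound[OF \<open>1 \<le> a\<close> _ \<open>real n * t0 = a\<^sup>2\<close>, of x] False \<open>0 < t0\<close> \<open>1 \<le> a\<close>
    unfolding a_def t0_def by auto
qed

end
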